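(* Let $\eta_1,\eta_2,\dots$ be iid with $\Pr(\eta_1\le x)=e^x$, $x\le 0$. Let $j=j(n)$, $k=k(n)$ be integers with $1\le j<k$ such that $j/n\to\lambda_1>0$ and $k/n\to\lambda_2>\lambda_1$ as $n\to\infty$. Put $\beta_i=\lambda_i/(\lambda_2-\lambda_1)$, $i=1,2$. Then for all $x_1,x_2\le 0$, \[ \lim_{n\to\infty}\Pr\left(\eta_j\le\frac{x_1}{n},\ \eta_k\le\frac{x_2}{n}\ \Big|\ \eta_j\text{ and }\eta_k\text{ are records}\right)=H_{\lambda_1,\lambda_2}(x_1,x_2), \] where \[ H_{\lambda_1,\lambda_2}(x_1,x_2)=\begin{cases} e^{\lambda_1x_1}\left(\beta_2e^{(\lambda_2-\lambda_1)x_2}-\beta_1e^{(\lambda_2-\lambda_1)x_1}\right), & \text{if } x_1<x_2,\\ e^{\lambda_2x_2}, & \text{if } x_1\ge x_2. \end{cases} \]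
   Context: $\eta_m$ is a record if $\eta_m>\max(\eta_1,\dots,\eta_{m-1})$; $\eta_1$ is always a record. *)

theory Defs
  imports "HOL-Probability.Probability"
begin

text \<open>Indices start at 1: eta 1, eta 2, ...  The value eta 0 is irrelevant.
  eta m is a record at outcome w iff eta m w > max(eta 1 w, ..., eta (m-1) w);
  eta 1 is always a record (vacuous condition).\<close>
definition is_record :: "(nat \<Rightarrow> 'a \<Rightarrow> real) \<Rightarrow> nat \<Rightarrow> 'a \<Rightarrow> bool" where
  "is_record eta m w \<longleftrightarrow> (\<forall>i\<in>{1..<m}. eta i w < eta m w)"

definition H :: "real \<Rightarrow> real \<Rightarrow> real \<Rightarrow> real \<Rightarrow> real" where
  "H l1 l2 x1 x2 =
    (let b1 = l1 / (l2 - l1); b2 = l2 / (l2 - l1) in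
     if x1 < x2 then exp (l1 * x1) * (b2 * exp ((l2 - l1) * x2) - b1 * exp ((l2 - l1) * x1))
     else exp (l2 * x2))"

end

theory Submission
  imports Defs
begin

text \<open>
  The variables have density e^y on (-inf, 0]. Given eta_j = y < z = eta_k, both are records iff
  the j - 1 earlier variables lie below y and the k - j - 1 intermediate ones lie below z, which by
  independence has probability e^((j-1) y) e^((k-j-1) z). Integrating over y <= a, z <= b gives the
  joint probability in closed form. Its value at (x1/n, x2/n) divided by its value at (0, 0) is
  exactly H (j/n) (k/n) x1 x2, and H is continuous in its first two arguments off the diagonal.
\<close>

lemma ennreal_eq_diff_of_add:
  fixes x :: ennreal and r s :: real
  assumes "x + ennreal r = ennreal s" "0 \<le> r"
  shows "x = ennreal (s - r)"
proof -
  obtain p where p: "x = ennreal p" "p \<ge> 0"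
    using assms(1) by (cases x) auto
  then have "ennreal (p + r) = ennreal s"
    using assms by (simp add: ennreal_plus)
  then have "p + r = s \<or> (p + r \<le> 0 \<and> s \<le> 0)"
    by (metis ennreal_eq_0_iff ennreal_inj linorder_le_cases order_trans)
  then show ?thesis
    using p assms by (auto simp: ennreal_neg)
qed

lemma nn_integral_exp_Iic:
  fixes m c :: real
  assumes "m > 0"
  shows "(\<integral>\<^sup>+ y. ennreal (indicator {..c} y * exp (m * y)) \<partial>lborel) = ennreal (exp (m * c) / m)"
proof -
  have "(\<integral>\<^sup>+ y. ennreal (indicator {..c} y * exp (m * y)) \<partial>lborel)
      = ennreal \<bar>-1\<bar> * (\<integral>\<^sup>+ x. ennreal (indicator {..c} (0 + -1 * x) * exp (m * (0 + -1 * x))) \<partial>lborel)"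
    by (rule nn_integral_real_affine) auto
  also have "\<dots> = (\<integral>\<^sup>+ x. ennreal (indicator {-c..} x * exp (-m * x)) \<partial>lborel)"
    by (auto intro!: nn_integral_cong simp: indicator_def)
  also have "\<dots> = ennreal (exp (m * c) / m)"
    using nn_integral_has_integral_lebesgue[OF _ has_integral_exp_minus_to_infinity[OF assms]]
    by simp
  finally show ?thesis .
qed

lemma nn_integral_exp_Iio:
  fixes m c :: real
  assumes "m > 0"
  shows "(\<integral>\<^sup>+ y. ennreal (indicator {..<c} y * exp (m * y)) \<partial>lborel) = ennreal (exp (m * c) / m)"
proof -
  have "(\<integral>\<^sup>+ y. ennreal (indicator {..<c} y * exp (m * y)) \<partial>lborel)
     = (\<integral>\<^sup>+ y. ennreal (indicator {..c} y * exp (m * y)) \<partial>lborel)"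
    by (intro nn_integral_cong_AE, use AE_lborel_singleton[of c] in eventually_elim)
       (auto simp: indicator_def)
  then show ?thesis
    using nn_integral_exp_Iic[OF assms] by simp
qed

lemma nn_integral_exp_Ioc:
  fixes m y b :: real
  assumes m: "m > 0"
  shows "(\<integral>\<^sup>+ z. ennreal (indicator {y<..b} z * exp (m * z)) \<partial>lborel)
       = ennreal (indicator {..b} y * (exp (m * b) - exp (m * y)) / m)"
proof (cases "y \<le> b")
  case True
  have "(\<integral>\<^sup>+ z. ennreal (indicator {..b} z * exp (m * z)) \<partial>lborel)
     = (\<integral>\<^sup>+ z. ennreal (indicator {y<..b} z * exp (m * z)) + ennreal (indicator {..y} z * exp (m * z)) \<partial>lborel)"
    using True by (intro nn_integral_cong) (auto simp: indicator_def)
  also have "\<dots> = (\<integral>\<^sup>+ z. ennreal (indicator {y<..b} z * exp (m * z)) \<partial>lborel)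
                 + (\<integral>\<^sup>+ z. ennreal (indicator {..y} z * exp (m * z)) \<partial>lborel)"
    by (rule nn_integral_add) measurable
  finally have "(\<integral>\<^sup>+ z. ennreal (indicator {y<..b} z * exp (m * z)) \<partial>lborel) + ennreal (exp (m * y) / m)
      = ennreal (exp (m * b) / m)"
    using nn_integral_exp_Iic[OF m] by simp
  from ennreal_eq_diff_of_add[OF this] m True show ?thesis
    by (simp add: diff_divide_distrib)
qed simp

lemma nn_integral_exp_times_exp_diff:
  fixes m r b c :: real
  assumes m: "m > 0" and r: "r > 0" and "c \<le> b"
  shows "(\<integral>\<^sup>+ y. ennreal (indicator {..c} y * exp (r * y) * (exp (m * b) - exp (m * y)) / m) \<partial>lborel)
       = ennreal ((exp (m * b + r * c) / r - exp ((r + m) * c) / (r + m)) / m)"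
proof -
  let ?f = "\<lambda>y. indicator {..c} y * exp (r * y) * (exp (m * b) - exp (m * y)) / m"
  have "(\<integral>\<^sup>+ y. ennreal (indicator {..c} y * exp (r * y)) * ennreal (exp (m * b) / m) \<partial>lborel)
     = (\<integral>\<^sup>+ y. ennreal (?f y) + ennreal (indicator {..c} y * exp ((r + m) * y)) * ennreal (1 / m) \<partial>lborel)"
  proof (intro nn_integral_cong)
    fix y
    have "exp (m * y) \<le> exp (m * b)" if "y \<le> c"
      using that \<open>c \<le> b\<close> m by simp
    moreover have "exp (r * y) * exp (m * b) / m = exp (r * y) * (exp (m * b) - exp (m * y)) / m + exp ((r + m) * y) / m"
      using m by (simp add: field_simps exp_add[symmetric] distrib_right)
    ultimately show "ennreal (indicator {..c} y * exp (r * y)) * ennreal (exp (m * b) / m)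
        = ennreal (?f y) + ennreal (indicator {..c} y * exp ((r + m) * y)) * ennreal (1 / m)"
      using m by (auto simp: indicator_def ennreal_mult'[symmetric] ennreal_plus[symmetric] simp del: ennreal_plus)
  qed
  also have "\<dots> = (\<integral>\<^sup>+ y. ennreal (?f y) \<partial>lborel)
               + (\<integral>\<^sup>+ y. ennreal (indicator {..c} y * exp ((r + m) * y)) \<partial>lborel) * ennreal (1 / m)"
    by (subst nn_integral_add) (auto simp: nn_integral_multc)
  finally have "(\<integral>\<^sup>+ y. ennreal (?f y) \<partial>lborel) + ennreal (exp ((r + m) * c) / (r + m)) * ennreal (1 / m)
       = ennreal (exp (r * c) / r) * ennreal (exp (m * b) / m)"
    using nn_integral_exp_Iic[OF r] nn_integral_exp_Iic[of "r + m" c] m r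
    by (simp add: nn_integral_multc)
  then have "(\<integral>\<^sup>+ y. ennreal (?f y) \<partial>lborel) + ennreal (exp ((r + m) * c) / (r + m) * (1 / m))
       = ennreal (exp (r * c) / r * (exp (m * b) / m))"
    using m r by (simp add: ennreal_mult'[symmetric])
  from ennreal_eq_diff_of_add[OF this] m r show ?thesis
    by (simp add: exp_add diff_divide_distrib mult.commute)
qed

lemma prod_indicator_eq_indicator_Pi:
  "finite J \<Longrightarrow> (\<Prod>i\<in>J. indicator (A i) (x i)) = (indicator (Pi J A) x :: 'a :: comm_semiring_1)"
  by (induction J rule: finite_induct) (auto simp: indicator_def)

lemma product_nn_integral_insert2_rev:
  assumes "product_sigma_finite M" and "finite I" "i \<notin> insert j I" "j \<notin> I"
    and f: "f \<in> borel_measurable (Pi\<^sub>M (insert i (insert j I)) M)"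
  shows "integral\<^sup>N (Pi\<^sub>M (insert i (insert j I)) M) f
       = (\<integral>\<^sup>+ y. \<integral>\<^sup>+ z. \<integral>\<^sup>+ x. f (x(j := z, i := y)) \<partial>Pi\<^sub>M I M \<partial>M j \<partial>M i)"
proof -
  interpret product_sigma_finite M by fact
  have "integral\<^sup>N (Pi\<^sub>M (insert i (insert j I)) M) f
      = (\<integral>\<^sup>+ y. \<integral>\<^sup>+ x. f (x(i := y)) \<partial>Pi\<^sub>M (insert j I) M \<partial>M i)"
    by (rule product_nn_integral_insert_rev) (use assms in auto)
  also have "\<dots> = (\<integral>\<^sup>+ y. \<integral>\<^sup>+ z. \<integral>\<^sup>+ x. f (x(j := z, i := y)) \<partial>Pi\<^sub>M I M \<partial>M j \<partial>M i)"
  proof (rule nn_integral_cong)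
    fix y assume "y \<in> space (M i)"
    then have "(\<lambda>x. x(i := y)) \<in> Pi\<^sub>M (insert j I) M \<rightarrow>\<^sub>M Pi\<^sub>M (insert i (insert j I)) M"
      by (intro measurable_fun_upd[where f="\<lambda>x. x"]) auto
    from measurable_comp[OF this f]
    have "(\<lambda>x. f (x(i := y))) \<in> borel_measurable (Pi\<^sub>M (insert j I) M)"
      by (simp add: comp_def)
    then show "(\<integral>\<^sup>+ x. f (x(i := y)) \<partial>Pi\<^sub>M (insert j I) M)
        = (\<integral>\<^sup>+ z. \<integral>\<^sup>+ x. f (x(j := z, i := y)) \<partial>Pi\<^sub>M I M \<partial>M j)"
      using assms(2,4) by (subst product_nn_integral_insert_rev) auto
  qed
  finally show ?thesis .
qed

definition neg_exponential :: "real measure" where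
  "neg_exponential = density lborel (\<lambda>y. ennreal (indicator {..0} y * exp y))"

lemma sets_neg_exponential [simp, measurable_cong]: "sets neg_exponential = sets borel"
  by (simp add: neg_exponential_def)

lemma space_neg_exponential [simp]: "space neg_exponential = UNIV"
  by (simp add: neg_exponential_def)

lemma nn_integral_neg_exponential:
  assumes [measurable]: "g \<in> borel_measurable borel"
  shows "(\<integral>\<^sup>+ y. g y \<partial>neg_exponential) = (\<integral>\<^sup>+ y. ennreal (indicator {..0} y * exp y) * g y \<partial>lborel)"
  unfolding neg_exponential_def by (subst nn_integral_density) auto

lemma emeasure_neg_exponential_atMost:
  "emeasure neg_exponential {..t} = ennreal (exp (min t 0))"
proof -
  have "emeasure neg_exponential {..t} = (\<integral>\<^sup>+ y. ennreal (indicator {..min t 0} y * exp (1 * y)) \<partial>lborel)"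
    unfolding neg_exponential_def
    by (subst emeasure_density) (auto intro!: nn_integral_cong simp: indicator_def)
  then show ?thesis
    using nn_integral_exp_Iic[of 1] by simp
qed

lemma emeasure_neg_exponential_lessThan:
  assumes "t \<le> 0"
  shows "emeasure neg_exponential {..<t} = ennreal (exp t)"
proof -
  have "emeasure neg_exponential {..<t} = (\<integral>\<^sup>+ y. ennreal (indicator {..<t} y * exp (1 * y)) \<partial>lborel)"
    unfolding neg_exponential_def using assms
    by (subst emeasure_density) (auto intro!: nn_integral_cong simp: indicator_def)
  then show ?thesis
    using nn_integral_exp_Iio[of 1] by simp
qed

lemma prob_space_neg_exponential: "prob_space neg_exponential"
proof
  have "emeasure neg_exponential UNIV = (\<integral>\<^sup>+ y. ennreal (indicator {..0} y * exp (1 * y)) \<partial>lborel)"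
    unfolding neg_exponential_def by (subst emeasure_density) auto
  then show "emeasure neg_exponential (space neg_exponential) = 1"
    using nn_integral_exp_Iic[of 1 0] by simp
qed

lemma real_distribution_neg_exponential: "real_distribution neg_exponential"
  using prob_space_neg_exponential by (simp add: real_distribution_def real_distribution_axioms_def)

lemma distr_eq_neg_exponential:
  assumes "prob_space M" and [measurable]: "X \<in> borel_measurable M"
    and cdf: "\<And>x. x \<le> 0 \<Longrightarrow> measure M {w \<in> space M. X w \<le> x} = exp x"
  shows "distr M borel X = neg_exponential"
proof (rule cdf_unique)
  interpret prob_space M by fact
  show "real_distribution (distr M borel X)" by simp
  show "real_distribution neg_exponential" by (rule real_distribution_neg_exponential)
  show "cdf (distr M borel X) = cdf neg_exponential"
  proof
    fix x :: real
    have "cdf (distr M borel X) x = measure M {w \<in> space M. X w \<le> x}"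
      unfolding cdf_def by (subst measure_distr) (auto intro!: arg_cong[where f="measure M"])
    also have "\<dots> = exp (min x 0)"
    proof (cases "x \<le> 0")
      case False
      then have "measure M {w \<in> space M. X w \<le> 0} \<le> measure M {w \<in> space M. X w \<le> x}"
        by (intro finite_measure_mono) auto
      moreover have "measure M {w \<in> space M. X w \<le> x} \<le> 1" by simp
      ultimately show ?thesis
        using cdf[of 0] False by simp
    qed (simp add: cdf)
    also have "\<dots> = cdf neg_exponential x"
      unfolding cdf_def measure_def using emeasure_neg_exponential_atMost[of x] by simp
    finally show "cdf (distr M borel X) x = cdf neg_exponential x" .
  qed
qed

definition record_pair_event :: "nat \<Rightarrow> nat \<Rightarrow> real \<Rightarrow> real \<Rightarrow> (nat \<Rightarrow> real) set" where
  "record_pair_event j k a b =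
     {x. x j \<le> a \<and> x k \<le> b \<and> is_record (\<lambda>i x. x i) j x \<and> is_record (\<lambda>i x. x i) k x}"

lemma record_pair_event_in_sets:
  assumes N: "sets N = sets borel" and "1 \<le> j" "j \<le> k"
  shows "space (Pi\<^sub>M {1..k} (\<lambda>_. N)) \<inter> record_pair_event j k a b \<in> sets (Pi\<^sub>M {1..k} (\<lambda>_. N))"
proof -
  have component: "(\<lambda>x. x i) \<in> borel_measurable (Pi\<^sub>M {1..k} (\<lambda>_. N))" if "i \<in> {1..k}" for i
    using measurable_component_singleton[OF that, of "\<lambda>_. N"] measurable_cong_sets[OF refl N] by metis
  have bounded: "Measurable.pred (Pi\<^sub>M {1..k} (\<lambda>_. N)) (\<lambda>x. x i \<le> c)" if "i \<in> {1..k}" for i c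
    using component[OF that] by measurable
  have records: "Measurable.pred (Pi\<^sub>M {1..k} (\<lambda>_. N)) (is_record (\<lambda>i x. x i) m)"
    if "m \<in> {1..k}" for m
    unfolding is_record_def
  proof (rule pred_intros_finite(3))
    fix i assume "i \<in> {1..<m}"
    with that have "i \<in> {1..k}" by auto
    then show "Measurable.pred (Pi\<^sub>M {1..k} (\<lambda>_. N)) (\<lambda>x. x i < x m)"
      using component[OF \<open>i \<in> {1..k}\<close>] component[OF that] by measurable
  qed simp
  have "Measurable.pred (Pi\<^sub>M {1..k} (\<lambda>_. N))
      (\<lambda>x. x j \<le> a \<and> x k \<le> b \<and> is_record (\<lambda>i x. x i) j x \<and> is_record (\<lambda>i x. x i) k x)"
    using assms by (intro pred_intros_logic bounded records) auto
  then show ?thesis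
    unfolding record_pair_event_def pred_def by (simp add: Int_def)
qed

lemma is_record_pair_fun_upd_iff:
  assumes "1 \<le> j" "j < k"
  shows "is_record (\<lambda>i x. x i) j (x(k := z, j := y)) \<and> is_record (\<lambda>i x. x i) k (x(k := z, j := y)) \<longleftrightarrow>
         y < z \<and> (\<forall>i\<in>{1..k} - {j, k}. x i < (if i < j then y else z))"
    (is "?records \<longleftrightarrow> ?gaps")
proof
  let ?w = "x(k := z, j := y)"
  assume ?gaps
  then have gaps: "y < z" "\<And>i. i \<in> {1..k} - {j, k} \<Longrightarrow> x i < (if i < j then y else z)"
    by blast+
  have "?w i < y" if "i \<in> {1..<j}" for i
    using gaps(2)[of i] that assms by auto
  moreover have "?w i < z" if "i \<in> {1..<k}" for i
    using gaps(1) gaps(2)[of i] that by (cases "i = j") (auto split: if_splits)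
  ultimately show ?records
    using assms by (simp add: is_record_def)
next
  let ?w = "x(k := z, j := y)"
  assume ?records
  then have records: "\<And>i. i \<in> {1..<j} \<Longrightarrow> ?w i < y" "\<And>i. i \<in> {1..<k} \<Longrightarrow> ?w i < z"
    using assms by (simp_all add: is_record_def)
  have "y < z"
    using records(2)[of j] assms by simp
  moreover have "x i < (if i < j then y else z)" if "i \<in> {1..k} - {j, k}" for i
    using records(1)[of i] records(2)[of i] that by (cases "i < j") auto
  ultimately show ?gaps by blast
qed

lemma fun_upd_in_record_pair_event_iff:
  assumes "1 \<le> j" "j < k"
  shows "x(k := z, j := y) \<in> record_pair_event j k a b \<longleftrightarrow>
         y \<le> a \<and> z \<le> b \<and> y < z \<and> (\<forall>i\<in>{1..k} - {j, k}. x i < (if i < j then y else z))"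
  using is_record_pair_fun_upd_iff[OF assms, of x z y] assms by (auto simp: record_pair_event_def)

lemma sum_if_less_over_gaps:
  fixes y z :: real
  assumes "1 \<le> j" "j < k"
  shows "(\<Sum>i\<in>{1..k} - {j, k}. if i < j then y else z) = (real j - 1) * y + (real k - real j - 1) * z"
proof -
  have split: "{1..k} - {j, k} = {1..<j} \<union> {j<..<k}"
    using assms by auto
  have "(\<Sum>i\<in>{1..k} - {j, k}. if i < j then y else z) = (\<Sum>i\<in>{1..<j}. y) + (\<Sum>i\<in>{j<..<k}. z)"
    unfolding split by (subst sum.union_disjoint) (auto intro!: arg_cong2[where f="(+)"] sum.cong)
  then show ?thesis
    using assms by (simp add: of_nat_diff)
qed

lemma nn_integral_fun_upd_record_pair_event:
  fixes j k :: nat and a b y z :: real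
  assumes jk: "1 \<le> j" "j < k" and "a \<le> 0" "b \<le> 0"
  shows "(\<integral>\<^sup>+ x. indicator (record_pair_event j k a b) (x(k := z, j := y))
            \<partial>Pi\<^sub>M ({1..k} - {j, k}) (\<lambda>_. neg_exponential))
       = ennreal (indicator {..a} y * indicator {..b} z * indicator {..<z} y
                  * exp ((real j - 1) * y + (real k - real j - 1) * z))"
proof -
  interpret product_sigma_finite "\<lambda>_::nat. neg_exponential"
    unfolding product_sigma_finite_def
    using prob_space_neg_exponential prob_space_imp_sigma_finite by blast
  define J where "J = {1..k} - {j, k}"
  define c where "c i = (if i < j then y else z)" for i
  let ?event = "indicator {..a} y * indicator {..b} z * indicator {..<z} y :: real"
  have "(\<integral>\<^sup>+ x. indicator (record_pair_event j k a b) (x(k := z, j := y)) \<partial>Pi\<^sub>M J (\<lambda>_. neg_exponential))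
      = (\<integral>\<^sup>+ x. ennreal ?event * (\<Prod>i\<in>J. indicator {..< c i} (x i)) \<partial>Pi\<^sub>M J (\<lambda>_. neg_exponential))"
  proof (intro nn_integral_cong)
    fix x :: "nat \<Rightarrow> real"
    have "(\<Prod>i\<in>J. indicator {..< c i} (x i)) = (indicator (Pi J (\<lambda>i. {..< c i})) x :: ennreal)"
      by (rule prod_indicator_eq_indicator_Pi) (simp add: J_def)
    moreover have "indicator (record_pair_event j k a b) (x(k := z, j := y))
        = ennreal ?event * indicator (Pi J (\<lambda>i. {..< c i})) x"
      by (simp add: fun_upd_in_record_pair_event_iff[OF jk] indicator_def Pi_iff J_def c_def)
    ultimately show "indicator (record_pair_event j k a b) (x(k := z, j := y))
        = ennreal ?event * (\<Prod>i\<in>J. indicator {..< c i} (x i))"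
      by simp
  qed
  also have "\<dots> = ennreal ?event * (\<integral>\<^sup>+ x. (\<Prod>i\<in>J. indicator {..< c i} (x i)) \<partial>Pi\<^sub>M J (\<lambda>_. neg_exponential))"
    by (rule nn_integral_cmult) (simp add: J_def)
  also have "(\<integral>\<^sup>+ x. (\<Prod>i\<in>J. indicator {..< c i} (x i)) \<partial>Pi\<^sub>M J (\<lambda>_. neg_exponential))
      = (\<Prod>i\<in>J. emeasure neg_exponential {..< c i})"
    by (subst product_nn_integral_prod) (auto simp: J_def)
  also have "ennreal ?event * (\<Prod>i\<in>J. emeasure neg_exponential {..< c i})
      = ennreal (?event * exp ((real j - 1) * y + (real k - real j - 1) * z))"
  proof (cases "y \<le> a \<and> z \<le> b \<and> y < z")
    case True
    then have "c i \<le> 0" for i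
      using assms by (simp add: c_def)
    then have prod: "(\<Prod>i\<in>J. emeasure neg_exponential {..< c i}) = ennreal (exp (\<Sum>i\<in>J. c i))"
      by (simp add: emeasure_neg_exponential_lessThan prod_ennreal exp_sum J_def)
    then show ?thesis
      using True sum_if_less_over_gaps[OF jk, of y z] by (simp add: ennreal_mult' J_def c_def)
  qed (auto simp: indicator_def)
  finally show ?thesis
    unfolding J_def .
qed

lemma emeasure_record_pair_event_iterated:
  fixes j k :: nat and a b :: real
  assumes jk: "1 \<le> j" "j < k" and "a \<le> 0" "b \<le> 0"
  shows "emeasure (Pi\<^sub>M {1..k} (\<lambda>_. neg_exponential))
           (space (Pi\<^sub>M {1..k} (\<lambda>_. neg_exponential)) \<inter> record_pair_event j k a b)
       = (\<integral>\<^sup>+ y. \<integral>\<^sup>+ z. ennreal (indicator {..a} y * indicator {..b} z * indicator {..<z} y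
               * exp ((real j - 1) * y + (real k - real j - 1) * z)) \<partial>neg_exponential \<partial>neg_exponential)"
proof -
  have product: "product_sigma_finite (\<lambda>_::nat. neg_exponential)"
    unfolding product_sigma_finite_def
    using prob_space_neg_exponential prob_space_imp_sigma_finite by blast
  define J where "J = {1..k} - {j, k}"
  define S where "S = record_pair_event j k a b"
  let ?N = "Pi\<^sub>M {1..k} (\<lambda>_. neg_exponential)"
  have I: "insert j (insert k J) = {1..k}" and J: "finite J" "j \<notin> insert k J" "k \<notin> J"
    using jk by (auto simp: J_def)
  have S: "space ?N \<inter> S \<in> sets ?N"
    using record_pair_event_in_sets[of neg_exponential j k a b] jk unfolding S_def by simp
  then have S_measurable: "indicator S \<in> borel_measurable ?N"
    using borel_measurable_indicator'[where f="\<lambda>x. x" and A="\<lambda>_. S"] by (simp add: Int_def)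
  have "emeasure ?N (space ?N \<inter> S) = (\<integral>\<^sup>+ x. indicator S x \<partial>?N)"
    using S by (simp add: nn_integral_indicator[symmetric] Int_commute indicator_inter_arith)
  also have "\<dots> = (\<integral>\<^sup>+ y. \<integral>\<^sup>+ z. \<integral>\<^sup>+ x. indicator S (x(k := z, j := y))
           \<partial>Pi\<^sub>M J (\<lambda>_. neg_exponential) \<partial>neg_exponential \<partial>neg_exponential)"
    using product_nn_integral_insert2_rev[OF product J, unfolded I, OF S_measurable] by simp
  finally show ?thesis
    unfolding S_def J_def by (simp only: nn_integral_fun_upd_record_pair_event[OF assms])
qed

definition joint_record_prob :: "nat \<Rightarrow> nat \<Rightarrow> real \<Rightarrow> real \<Rightarrow> real" where
  "joint_record_prob j k a b =
     (exp ((real k - real j) * b + real j * min a b) / real j - exp (real k * min a b) / real k)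
     / (real k - real j)"

lemma nn_integral_neg_exponential_record_gap:
  fixes a b m p y :: real
  assumes m: "m > 0" and b: "b \<le> 0"
  shows "(\<integral>\<^sup>+ z. ennreal (indicator {..a} y * indicator {..b} z * indicator {..<z} y
            * exp (p * y + (m - 1) * z)) \<partial>neg_exponential)
       = ennreal (indicator {..a} y * exp (p * y) * (indicator {..b} y * (exp (m * b) - exp (m * y)) / m))"
proof -
  have [measurable]: "Measurable.pred borel (\<lambda>x::real. y \<in> {..<x})"
    by simp
  have "(\<integral>\<^sup>+ z. ennreal (indicator {..a} y * indicator {..b} z * indicator {..<z} y
            * exp (p * y + (m - 1) * z)) \<partial>neg_exponential)
      = (\<integral>\<^sup>+ z. ennreal (indicator {..0} z * exp z) * ennreal (indicator {..a} y * indicator {..b} z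
            * indicator {..<z} y * exp (p * y + (m - 1) * z)) \<partial>lborel)"
    by (rule nn_integral_neg_exponential) measurable
  also have "\<dots> = (\<integral>\<^sup>+ z. ennreal (indicator {..a} y * exp (p * y)) * ennreal (indicator {y<..b} z * exp (m * z)) \<partial>lborel)"
  proof (rule nn_integral_cong)
    fix z :: real
    have "exp z * exp (p * y + (m - 1) * z) = exp (p * y) * exp (m * z)"
      unfolding mult_exp_exp by (simp add: algebra_simps)
    then show "ennreal (indicator {..0} z * exp z) * ennreal (indicator {..a} y * indicator {..b} z
            * indicator {..<z} y * exp (p * y + (m - 1) * z))
        = ennreal (indicator {..a} y * exp (p * y)) * ennreal (indicator {y<..b} z * exp (m * z))"
      using b by (simp add: indicator_def ennreal_mult'[symmetric] mult_ac)
  qed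
  also have "\<dots> = ennreal (indicator {..a} y * exp (p * y)) * (\<integral>\<^sup>+ z. ennreal (indicator {y<..b} z * exp (m * z)) \<partial>lborel)"
    by (rule nn_integral_cmult) measurable
  also have "\<dots> = ennreal (indicator {..a} y * exp (p * y)) * ennreal (indicator {..b} y * (exp (m * b) - exp (m * y)) / m)"
    by (simp only: nn_integral_exp_Ioc[OF m])
  also have "\<dots> = ennreal (indicator {..a} y * exp (p * y) * (indicator {..b} y * (exp (m * b) - exp (m * y)) / m))"
    by (rule ennreal_mult'[symmetric]) simp
  finally show ?thesis .
qed

lemma nn_integral_record_pair_density:
  fixes j k :: nat and a b :: real
  assumes jk: "1 \<le> j" "j < k" and a: "a \<le> 0" and b: "b \<le> 0"
  shows "(\<integral>\<^sup>+ y. \<integral>\<^sup>+ z. ennreal (indicator {..a} y * indicator {..b} z * indicator {..<z} y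
            * exp ((real j - 1) * y + (real k - real j - 1) * z)) \<partial>neg_exponential \<partial>neg_exponential)
       = ennreal (joint_record_prob j k a b)"
proof -
  define m where "m = real k - real j"
  have m: "m > 0"
    using jk by (simp add: m_def)
  have inner: "(\<integral>\<^sup>+ z. ennreal (indicator {..a} y * indicator {..b} z * indicator {..<z} y
            * exp ((real j - 1) * y + (real k - real j - 1) * z)) \<partial>neg_exponential)
      = ennreal (indicator {..a} y * exp ((real j - 1) * y) * (indicator {..b} y * (exp (m * b) - exp (m * y)) / m))"
    for y
    using nn_integral_neg_exponential_record_gap[OF m b, where p = "real j - 1"] by (simp add: m_def)
  have "(\<integral>\<^sup>+ y. \<integral>\<^sup>+ z. ennreal (indicator {..a} y * indicator {..b} z * indicator {..<z} y
            * exp ((real j - 1) * y + (real k - real j - 1) * z)) \<partial>neg_exponential \<partial>neg_exponential)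
      = (\<integral>\<^sup>+ y. ennreal (indicator {..0} y * exp y)
           * ennreal (indicator {..a} y * exp ((real j - 1) * y) * (indicator {..b} y * (exp (m * b) - exp (m * y)) / m)) \<partial>lborel)"
    unfolding inner by (rule nn_integral_neg_exponential) measurable
  also have "\<dots> = (\<integral>\<^sup>+ y. ennreal (indicator {..min a b} y * exp (real j * y) * (exp (m * b) - exp (m * y)) / m) \<partial>lborel)"
  proof (rule nn_integral_cong)
    fix y :: real
    show "ennreal (indicator {..0} y * exp y)
           * ennreal (indicator {..a} y * exp ((real j - 1) * y) * (indicator {..b} y * (exp (m * b) - exp (m * y)) / m))
        = ennreal (indicator {..min a b} y * exp (real j * y) * (exp (m * b) - exp (m * y)) / m)"
    proof (cases "y \<le> min a b")
      case True
      have "exp y * exp ((real j - 1) * y) = exp (real j * y)"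
        by (simp add: mult_exp_exp algebra_simps)
      then show ?thesis
        using True a by (simp add: ennreal_mult'[symmetric] mult.assoc[symmetric])
    qed (use a in \<open>auto simp: indicator_def\<close>)
  qed
  also have "\<dots> = ennreal ((exp (m * b + real j * min a b) / real j - exp ((real j + m) * min a b) / (real j + m)) / m)"
    by (rule nn_integral_exp_times_exp_diff) (use m jk in auto)
  finally show ?thesis
    by (simp add: joint_record_prob_def m_def)
qed

lemma joint_record_prob_nonneg:
  assumes "1 \<le> j" "j < k"
  shows "joint_record_prob j k a b \<ge> 0"
proof -
  have "real k * min a b \<le> (real k - real j) * b + real j * min a b"
    using assms mult_left_mono[of "min a b" b "real k - real j"] by (simp add: algebra_simps)
  then have "exp (real k * min a b) / real k \<le> exp ((real k - real j) * b + real j * min a b) / real j"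
    using assms by (intro frac_le) auto
  then show ?thesis
    using assms by (simp add: joint_record_prob_def)
qed

lemma distr_restrict_eq_PiM_neg_exponential:
  fixes eta :: "nat \<Rightarrow> 'a \<Rightarrow> real"
  assumes "prob_space M" and indep: "prob_space.indep_vars M (\<lambda>_. borel) eta I"
    and cdf: "\<And>i x. i \<in> I \<Longrightarrow> x \<le> 0 \<Longrightarrow> measure M {w \<in> space M. eta i w \<le> x} = exp x"
    and "finite I" "I \<noteq> {}"
  shows "distr M (Pi\<^sub>M I (\<lambda>_. borel)) (\<lambda>w. \<lambda>i\<in>I. eta i w) = Pi\<^sub>M I (\<lambda>_. neg_exponential)"
proof -
  interpret prob_space M by fact
  have rv: "random_variable borel (eta i)" if "i \<in> I" for i
    using indep that unfolding indep_vars_def by auto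
  have "distr M (Pi\<^sub>M I (\<lambda>_. borel)) (\<lambda>w. \<lambda>i\<in>I. eta i w) = Pi\<^sub>M I (\<lambda>i. distr M borel (eta i))"
    by (rule indep_vars_iff_distr_eq_PiM'[THEN iffD1]) (use assms rv in auto)
  also have "\<dots> = Pi\<^sub>M I (\<lambda>_. neg_exponential)"
    by (rule PiM_cong) (auto intro!: distr_eq_neg_exponential assms rv cdf)
  finally show ?thesis .
qed

lemma measure_record_pair:
  fixes eta :: "nat \<Rightarrow> 'a \<Rightarrow> real"
  assumes "prob_space M" and indep: "prob_space.indep_vars M (\<lambda>_. borel) eta {1..}"
    and cdf: "\<And>i x. i \<ge> 1 \<Longrightarrow> x \<le> 0 \<Longrightarrow> measure M {w \<in> space M. eta i w \<le> x} = exp x"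
    and jk: "1 \<le> j" "j < k" and ab: "a \<le> 0" "b \<le> 0"
  shows "measure M {w \<in> space M. (eta j w \<le> a \<and> eta k w \<le> b) \<and> (is_record eta j w \<and> is_record eta k w)}
       = joint_record_prob j k a b"
proof -
  interpret prob_space M by fact
  let ?N = "Pi\<^sub>M {1..k} (\<lambda>_. neg_exponential)"
  let ?X = "\<lambda>w. \<lambda>i\<in>{1..k}. eta i w"
  let ?S = "space ?N \<inter> record_pair_event j k a b"
  have distr: "distr M (Pi\<^sub>M {1..k} (\<lambda>_. borel)) ?X = ?N"
    by (rule distr_restrict_eq_PiM_neg_exponential)
       (use assms in \<open>auto intro: indep_vars_subset[OF indep]\<close>)
  have "?S \<in> sets ?N"
    using jk by (intro record_pair_event_in_sets) auto
  then have S: "?S \<in> sets (Pi\<^sub>M {1..k} (\<lambda>_. borel))"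
    using distr by (metis sets_distr)
  have X: "?X \<in> M \<rightarrow>\<^sub>M Pi\<^sub>M {1..k} (\<lambda>_. borel)"
    using indep by (intro measurable_restrict) (auto simp: indep_vars_def)
  have "?X -` ?S \<inter> space M
      = {w \<in> space M. (eta j w \<le> a \<and> eta k w \<le> b) \<and> (is_record eta j w \<and> is_record eta k w)}"
    using jk by (auto simp: record_pair_event_def is_record_def space_PiM)
  then have "measure M {w \<in> space M. (eta j w \<le> a \<and> eta k w \<le> b) \<and> (is_record eta j w \<and> is_record eta k w)}
      = measure ?N ?S"
    using measure_distr[OF X S] distr by simp
  also have "\<dots> = joint_record_prob j k a b"
    using emeasure_record_pair_event_iterated[OF jk ab] nn_integral_record_pair_density[OF jk ab]
      joint_record_prob_nonneg[OF jk]
    by (simp add: measure_def)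
  finally show ?thesis .
qed

lemma measure_records:
  fixes eta :: "nat \<Rightarrow> 'a \<Rightarrow> real"
  assumes "prob_space M" and indep: "prob_space.indep_vars M (\<lambda>_. borel) eta {1..}"
    and cdf: "\<And>i x. i \<ge> 1 \<Longrightarrow> x \<le> 0 \<Longrightarrow> measure M {w \<in> space M. eta i w \<le> x} = exp x"
    and jk: "1 \<le> j" "j < k"
  shows "measure M {w \<in> space M. is_record eta j w \<and> is_record eta k w} = joint_record_prob j k 0 0"
proof -
  interpret prob_space M by fact
  have rv: "random_variable borel (eta i)" if "i \<ge> 1" for i
    using indep that unfolding indep_vars_def by auto
  have is_record_measurable: "Measurable.pred M (is_record eta m)" if "m \<ge> 1" for m
    unfolding is_record_def
  proof (rule pred_intros_finite(3))
    fix i assume "i \<in> {1..<m}"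
    then have "i \<ge> 1" by simp
    then show "Measurable.pred M (\<lambda>w. eta i w < eta m w)"
      using rv[OF \<open>i \<ge> 1\<close>] rv[OF that] by measurable
  qed simp
  have nonpos: "AE w in M. eta i w \<le> 0" if "i \<ge> 1" for i
    using AE_prob_1[of "{w \<in> space M. eta i w \<le> 0}"] cdf[OF that, of 0] rv[OF that] by auto
  have "measure M {w \<in> space M. is_record eta j w \<and> is_record eta k w}
      = measure M {w \<in> space M. (eta j w \<le> 0 \<and> eta k w \<le> 0) \<and> (is_record eta j w \<and> is_record eta k w)}"
  proof (rule finite_measure_eq_AE)
    show "AE w in M. (w \<in> {w \<in> space M. is_record eta j w \<and> is_record eta k w}) =
        (w \<in> {w \<in> space M. (eta j w \<le> 0 \<and> eta k w \<le> 0) \<and> (is_record eta j w \<and> is_record eta k w)})"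
    proof -
      have "k \<ge> 1" using jk by simp
      from nonpos[OF jk(1)] nonpos[OF this] show ?thesis by eventually_elim auto
    qed
  qed (use jk is_record_measurable rv in auto)
  also have "\<dots> = joint_record_prob j k 0 0"
    by (rule measure_record_pair) (use assms in auto)
  finally show ?thesis .
qed

lemma joint_record_prob_ratio:
  assumes n: "n > 0" and jk: "1 \<le> j" "j < k"
  shows "joint_record_prob j k (x1 / real n) (x2 / real n) / joint_record_prob j k 0 0
       = H (real j / real n) (real k / real n) x1 x2"
proof -
  define u v c where "u = real j / real n" and "v = real k / real n" and "c = min x1 x2"
  have uv: "u > 0" "v > u"
    using n jk by (auto simp: u_def v_def divide_strict_right_mono)
  have "min (x1 / real n) (x2 / real n) = c / real n"
    using n by (simp add: c_def min_def divide_le_cancel)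
  moreover have "(real k - real j) * (x2 / real n) + real j * (c / real n) = (v - u) * x2 + u * c"
    "real k * (c / real n) = v * c"
    by (simp_all add: u_def v_def algebra_simps add_divide_distrib[symmetric])
  ultimately have num: "joint_record_prob j k (x1 / real n) (x2 / real n)
      = (exp ((v - u) * x2 + u * c) / real j - exp (v * c) / real k) / (real k - real j)"
    by (simp add: joint_record_prob_def)
  have scale: "(E / J - F / K) / (1 / J - 1 / K) = (K * E - J * F) / (K - J)"
    if "J > 0" "K > J" for E F J K :: real
  proof -
    have "E / J - F / K = (K * E - J * F) / (J * K)" "1 / J - 1 / K = (K - J) / (J * K)"
      using that by (simp_all add: field_simps)
    then show ?thesis
      using that by simp
  qed
  have "joint_record_prob j k (x1 / real n) (x2 / real n) / joint_record_prob j k 0 0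
      = (real k * exp ((v - u) * x2 + u * c) - real j * exp (v * c)) / (real k - real j)"
    unfolding num using jk by (simp add: joint_record_prob_def scale)
  also have "\<dots> = (v * exp ((v - u) * x2 + u * c) - u * exp (v * c)) / (v - u)"
    using n by (simp add: u_def v_def diff_divide_distrib[symmetric])
  also have "\<dots> = H u v x1 x2"
  proof (cases "x1 < x2")
    case True
    have "H u v x1 x2 = (v * (exp (u * x1) * exp ((v - u) * x2)) - u * (exp (u * x1) * exp ((v - u) * x1))) / (v - u)"
      using True by (simp add: H_def algebra_simps diff_divide_distrib)
    moreover have "exp (u * x1) * exp ((v - u) * x2) = exp ((v - u) * x2 + u * x1)"
      "exp (u * x1) * exp ((v - u) * x1) = exp (v * x1)"
      by (simp_all add: mult_exp_exp algebra_simps)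
    ultimately show ?thesis
      using True by (simp add: c_def)
  next
    case False
    then show ?thesis
      using uv by (simp add: H_def c_def field_simps flip: exp_add)
  qed
  finally show ?thesis
    by (simp add: u_def v_def)
qed

lemma tendsto_H:
  assumes "(u \<longlongrightarrow> l1) F" "(v \<longlongrightarrow> l2) F" "l2 \<noteq> l1"
  shows "((\<lambda>n. H (u n) (v n) x1 x2) \<longlongrightarrow> H l1 l2 x1 x2) F"
  unfolding H_def Let_def using assms by (cases "x1 < x2") (auto intro!: tendsto_intros)

theorem proposition8:
  fixes M :: "'a measure" and eta :: "nat \<Rightarrow> 'a \<Rightarrow> real"
    and j k :: "nat \<Rightarrow> nat" and l1 l2 x1 x2 :: real
  assumes "prob_space M"
    and "prob_space.indep_vars M (\<lambda>_. borel) eta {1..}"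
    and "\<And>i x. i \<ge> 1 \<Longrightarrow> x \<le> 0 \<Longrightarrow> measure M {w \<in> space M. eta i w \<le> x} = exp x"
    and "\<And>n. 1 \<le> j n" and "\<And>n. j n < k n"
    and "(\<lambda>n. real (j n) / real n) \<longlonglongrightarrow> l1" and "l1 > 0"
    and "(\<lambda>n. real (k n) / real n) \<longlonglongrightarrow> l2" and "l2 > l1"
    and "x1 \<le> 0" and "x2 \<le> 0"
  shows "(\<lambda>n. cond_prob M
            (\<lambda>w. eta (j n) w \<le> x1 / real n \<and> eta (k n) w \<le> x2 / real n)
            (\<lambda>w. is_record eta (j n) w \<and> is_record eta (k n) w))
         \<longlonglongrightarrow> H l1 l2 x1 x2"
proof -
  have "(\<lambda>n. H (real (j n) / real n) (real (k n) / real n) x1 x2) \<longlonglongrightarrow> H l1 l2 x1 x2"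
    using assms(6,8,9) by (intro tendsto_H) auto
  moreover have "\<forall>\<^sub>F n in sequentially. H (real (j n) / real n) (real (k n) / real n) x1 x2
      = cond_prob M (\<lambda>w. eta (j n) w \<le> x1 / real n \<and> eta (k n) w \<le> x2 / real n)
                    (\<lambda>w. is_record eta (j n) w \<and> is_record eta (k n) w)"
    using eventually_gt_at_top[of 0]
  proof eventually_elim
    case (elim n)
    have scaled: "x1 / real n \<le> 0" "x2 / real n \<le> 0"
      using assms(10,11) by (simp_all add: divide_nonpos_nonneg)
    show ?case
      using measure_record_pair[OF assms(1-5) scaled] measure_records[OF assms(1-5)]
        joint_record_prob_ratio[OF elim assms(4,5)]
      by (simp add: cond_prob_def)
  qed
  ultimately show ?thesis
    by (rule Lim_transform_eventually)
qed

end
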